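(* Let $G$ be a connected graph on $n$ vertices. Then $b(G^2)\le \lceil \sqrt{n}\,\rceil$.
   Context: $G^2$ is the graph on $V(G)$ in which distinct $u,v$ are adjacent iff $d_G(u,v)\le 2$. Graph burning: in each round $i$ a vertex (source) is chosen and burned, and simultaneously every unburned neighbour of a vertex burned by the end of round $i-1$ becomes burned; burned vertices stay burned. The burning number $b(G)$ is the minimum number of rounds needed to burn all vertices. *)

theory Defs
  imports Complex_Main
begin

definition simple_graph :: "'a set \<Rightarrow> ('a \<Rightarrow> 'a \<Rightarrow> bool) \<Rightarrow> bool" where
  "simple_graph V E \<longleftrightarrow> finite V \<and> (\<forall>u v. E u v \<longrightarrow> u \<in> V \<and> v \<in> V)
     \<and> (\<forall>u v. E u v \<longrightarrow> E v u) \<and> (\<forall>u. \<not> E u u)"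

definition connected_graph :: "'a set \<Rightarrow> ('a \<Rightarrow> 'a \<Rightarrow> bool) \<Rightarrow> bool" where
  "connected_graph V E \<longleftrightarrow> simple_graph V E \<and> (\<forall>u\<in>V. \<forall>v\<in>V. E\<^sup>*\<^sup>* u v)"

definition graph_square :: "'a set \<Rightarrow> ('a \<Rightarrow> 'a \<Rightarrow> bool) \<Rightarrow> 'a \<Rightarrow> 'a \<Rightarrow> bool" where
  "graph_square V E u v \<longleftrightarrow> u \<in> V \<and> v \<in> V \<and> u \<noteq> v \<and>
     (E u v \<or> (\<exists>w\<in>V. E u w \<and> E w v))"

text \<open>Burning process: s i is the source chosen in round i+1.
burned E s k is the set of vertices burned after k rounds.\<close>
fun burned :: "('a \<Rightarrow> 'a \<Rightarrow> bool) \<Rightarrow> (nat \<Rightarrow> 'a) \<Rightarrow> nat \<Rightarrow> 'a set" where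
  "burned E s 0 = {}"
| "burned E s (Suc i) = burned E s i \<union> {v. \<exists>u\<in>burned E s i. E u v} \<union> {s i}"

definition burns_in :: "'a set \<Rightarrow> ('a \<Rightarrow> 'a \<Rightarrow> bool) \<Rightarrow> nat \<Rightarrow> bool" where
  "burns_in V E k \<longleftrightarrow> (\<exists>s. (\<forall>i<k. s i \<in> V) \<and> burned E s k = V)"

definition burning_number :: "'a set \<Rightarrow> ('a \<Rightarrow> 'a \<Rightarrow> bool) \<Rightarrow> nat" where
  "burning_number V E = (LEAST k. burns_in V E k)"

end

(* Fix a BFS tree of G rooted at r. While m + 1 centres remain to be placed, take a deepest
   remaining vertex u and its ancestor w at tree distance 2m: the remaining descendants of w are
   at least 2m + 1 vertices, all within tree distance 2m of w, and removing them leaves a set closed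
   under taking parents with at most m^2 vertices. (If no vertex is that deep, the root serves.)
   This gives centres x_0, ..., x_(k-1), k = ceil (sqrt n), with every vertex within distance 2i
   of some x_i in G, hence within distance i in G^2; lighting x_i in round k - i burns G^2
   within k rounds. *)

theory Submission
  imports Defs
begin

lemma burned_mono: "i \<le> j \<Longrightarrow> burned F s i \<subseteq> burned F s j"
  by (induction j) (auto simp: le_Suc_eq)

lemma relpowp_source_in_burned: "(F ^^ t) (s a) v \<Longrightarrow> v \<in> burned F s (Suc a + t)"
proof (induction t arbitrary: v)
  case 0
  then show ?case by simp
next
  case (Suc t)
  then obtain u where "(F ^^ t) (s a) u" "F u v" by (auto elim: relpowp_Suc_E)
  with Suc.IH show ?case by auto
qed

lemma burned_subset:
  "(\<And>u v. F u v \<Longrightarrow> v \<in> V) \<Longrightarrow> (\<And>i. i < k \<Longrightarrow> s i \<in> V) \<Longrightarrow> burned F s k \<subseteq> V"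
  by (induction k) auto

lemma burning_number_le_if_radius_cover:
  assumes F_V: "\<And>u v. F u v \<Longrightarrow> v \<in> V"
    and x_V: "\<And>i. i < k \<Longrightarrow> x i \<in> V"
    and cover: "\<And>v. v \<in> V \<Longrightarrow> \<exists>i<k. \<exists>t\<le>i. (F ^^ t) (x i) v"
  shows "burning_number V F \<le> k"
proof -
  define s where "s i = x (k - 1 - i)" for i
  \<comment> \<open>x i is lit in round k - i, leaving exactly i rounds to spread\<close>
  have s_V: "s i \<in> V" if "i < k" for i
    using x_V that by (simp add: s_def)
  have "V \<subseteq> burned F s k"
  proof
    fix v assume "v \<in> V"
    then obtain i t where i: "i < k" and t: "t \<le> i" and "(F ^^ t) (x i) v"
      using cover by blast
    then have "(F ^^ t) (s (k - 1 - i)) v" by (simp add: s_def)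
    then have "v \<in> burned F s (Suc (k - 1 - i) + t)" by (rule relpowp_source_in_burned)
    moreover have "Suc (k - 1 - i) + t \<le> k" using i t by linarith
    ultimately show "v \<in> burned F s k" using burned_mono[of _ k F s] by blast
  qed
  with burned_subset[of F V k s] F_V s_V have "burned F s k = V" by blast
  with s_V have "burns_in V F k" unfolding burns_in_def by blast
  then show ?thesis unfolding burning_number_def by (rule Least_le)
qed

lemma graph_square_relpowp_half:
  assumes graph: "simple_graph V E" and walk: "(E ^^ j) w v"
  shows "\<exists>t. 2 * t \<le> j + 1 \<and> (graph_square V E ^^ t) w v"
  using walk
proof (induction j arbitrary: v rule: nat_induct2)
  case 0
  then show ?case by (intro exI[of _ 0]) simp
next
  case 1
  then have "graph_square V E w v"
    using graph unfolding simple_graph_def graph_square_def by auto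
  then show ?case by (intro exI[of _ 1]) (simp del: relpowp.simps)
next
  case (step j)
  then obtain a b where "(E ^^ j) w a" "E a b" "E b v"
    by (auto simp: numeral_2_eq_2 elim!: relpowp_Suc_E)
  moreover from this(1) obtain t where t: "2 * t \<le> j + 1" "(graph_square V E ^^ t) w a"
    using step.IH by blast
  ultimately have "a = v \<or> graph_square V E a v"
    using graph unfolding simple_graph_def graph_square_def by blast
  then show ?case
  proof
    assume "a = v"
    with t show ?case by (intro exI[of _ t]) simp
  next
    assume "graph_square V E a v"
    with t show ?case by (intro exI[of _ "Suc t"]) auto
  qed
qed

locale bfs_tree =
  fixes V :: "'a set" and E :: "'a \<Rightarrow> 'a \<Rightarrow> bool" and r :: 'a
    and p :: "'a \<Rightarrow> 'a" and d :: "'a \<Rightarrow> nat"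
  assumes finite_V: "finite V"
    and root_in_V: "r \<in> V"
    and parent_root: "p r = r"
    and parent_in_V: "v \<in> V \<Longrightarrow> p v \<in> V"
    and parent_edge: "v \<in> V \<Longrightarrow> v \<noteq> r \<Longrightarrow> E (p v) v"
    and depth_parent: "v \<in> V \<Longrightarrow> v \<noteq> r \<Longrightarrow> Suc (d (p v)) = d v"
    and depth_root: "d r = 0"
begin

definition descendants :: "'a \<Rightarrow> 'a set" where
  "descendants w = {v \<in> V. \<exists>j. (p ^^ j) v = w}"

lemma ancestor_in_closed: "(\<And>v. v \<in> R \<Longrightarrow> p v \<in> R) \<Longrightarrow> v \<in> R \<Longrightarrow> (p ^^ j) v \<in> R"
  by (induction j) auto

lemmas ancestor_in_V = ancestor_in_closed[OF parent_in_V]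

lemma ancestor_of_root: "(p ^^ j) r = r"
  by (induction j) (auto simp: parent_root)

lemma depth_ancestor: "v \<in> V \<Longrightarrow> j \<le> d v \<Longrightarrow> d ((p ^^ j) v) = d v - j"
proof (induction j)
  case 0
  then show ?case by simp
next
  case (Suc j)
  let ?y = "(p ^^ j) v"
  have "?y \<in> V" "d ?y = d v - j" using Suc ancestor_in_V by auto
  moreover from this have "?y \<noteq> r" using Suc.prems depth_root by auto
  ultimately show ?case using depth_parent by force
qed

lemma ancestor_depth_eq_root: "v \<in> V \<Longrightarrow> (p ^^ d v) v = r"
  using depth_ancestor[of v "d v"] ancestor_in_V[of v "d v"] depth_parent by fastforce

lemma ancestor_index_le_depth:
  assumes "v \<in> V" "(p ^^ j) v = w" "w \<noteq> r"
  shows "j \<le> d v"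
proof (rule ccontr)
  assume "\<not> j \<le> d v"
  then have "(p ^^ j) v = (p ^^ (j - d v)) ((p ^^ d v) v)"
    by (metis funpow_add comp_apply le_add_diff_inverse2 nat_le_linear)
  with assms show False by (simp add: ancestor_depth_eq_root ancestor_of_root)
qed

lemma relpowp_ancestor: "v \<in> V \<Longrightarrow> j \<le> d v \<Longrightarrow> (E ^^ j) ((p ^^ j) v) v"
proof (induction j)
  case 0
  then show ?case by simp
next
  case (Suc j)
  let ?y = "(p ^^ j) v"
  have "?y \<in> V" "d ?y = d v - j" using Suc.prems ancestor_in_V depth_ancestor by auto
  then have "E (p ?y) ?y" using Suc.prems depth_root parent_edge by fastforce
  moreover have "(E ^^ j) ?y v" using Suc by simp
  ultimately have "(E ^^ Suc j) (p ?y) v" by (rule relpowp_Suc_I2)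
  then show ?case by (simp del: relpowp.simps)
qed

lemma child_in_descendants:
  assumes "v \<in> V" "p v \<in> descendants w"
  shows "v \<in> descendants w"
proof -
  obtain j where "(p ^^ j) (p v) = w" using assms(2) unfolding descendants_def by blast
  then have "(p ^^ Suc j) v = w" by (simp only: funpow_Suc_right comp_apply)
  with assms(1) show ?thesis unfolding descendants_def by blast
qed

lemma relpowp_from_ancestor:
  assumes "v \<in> descendants w" "w \<noteq> r"
  shows "(E ^^ (d v - d w)) w v"
proof -
  obtain j where v: "v \<in> V" and j: "(p ^^ j) v = w"
    using assms(1) unfolding descendants_def by blast
  have "j \<le> d v" using v j assms(2) by (rule ancestor_index_le_depth)
  with v j have "d v - d w = j" using depth_ancestor by fastforce
  with j show ?thesis using relpowp_ancestor[OF v \<open>j \<le> d v\<close>] by simp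
qed

lemma card_descendants_of_ancestor:
  assumes R: "R \<subseteq> V" "\<And>v. v \<in> R \<Longrightarrow> p v \<in> R" and u: "u \<in> R" "h \<le> d u"
  shows "Suc h \<le> card (R \<inter> descendants ((p ^^ h) u))"
proof -
  let ?a = "\<lambda>j. (p ^^ j) u"
  have "?a j \<in> descendants (?a h)" if "j \<le> h" for j
  proof -
    have "(p ^^ (h - j)) (?a j) = ?a h"
      using that by (metis comp_apply funpow_add le_add_diff_inverse2)
    then show ?thesis using R(1) u(1) ancestor_in_V unfolding descendants_def by blast
  qed
  then have "?a ` {..h} \<subseteq> R \<inter> descendants (?a h)"
    using R u(1) ancestor_in_closed by auto
  moreover have "inj_on ?a {..h}"
  proof (rule inj_onI)
    fix i j assume "i \<in> {..h}" "j \<in> {..h}" "?a i = ?a j"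
    then show "i = j" using depth_ancestor[of u] R(1) u by (metis atMost_iff diff_diff_cancel le_trans subsetD)
  qed
  moreover have "finite (R \<inter> descendants (?a h))" using R(1) finite_V finite_subset by blast
  ultimately have "card (?a ` {..h}) \<le> card (R \<inter> descendants (?a h))" by (simp add: card_mono)
  with \<open>inj_on ?a {..h}\<close> show ?thesis by (simp add: card_image)
qed

lemma ancestor_radius_cover:
  assumes "R \<subseteq> V" "\<And>v. v \<in> R \<Longrightarrow> p v \<in> R" "card R \<le> k * k"
  shows "\<exists>x. (\<forall>i<k. x i \<in> V) \<and> (\<forall>v\<in>R. \<exists>i<k. \<exists>j\<le>2*i. (E ^^ j) (x i) v)"
  using assms
proof (induction k arbitrary: R)
  case 0
  then have "R = {}" using finite_V finite_subset by fastforce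
  then show ?case by blast
next
  case (Suc m)
  have finite_R: "finite R" using Suc.prems(1) finite_V finite_subset by blast
  show ?case
  proof (cases "\<forall>v\<in>R. d v \<le> 2 * m")
    case True
    have "(E ^^ d v) r v" if "v \<in> R" for v
      using that Suc.prems(1) relpowp_ancestor[of v "d v"] ancestor_depth_eq_root by auto
    with True root_in_V show ?thesis by (intro exI[of _ "\<lambda>_. r"]) blast
  next
    case False
    have "Max (d ` R) \<in> d ` R" using False finite_R by (intro Max_in) auto
    then obtain u where u: "u \<in> R" and "d u = Max (d ` R)" by auto
    with finite_R have deepest: "\<And>v. v \<in> R \<Longrightarrow> d v \<le> d u" by simp
    then have deep: "2 * m < d u" using False by fastforce
    define w where "w = (p ^^ (2 * m)) u"
    have "d w = d u - 2 * m" unfolding w_def using Suc.prems(1) u deep depth_ancestor by auto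
    with deep depth_root have w_not_root: "w \<noteq> r" by auto
    have w_V: "w \<in> V" unfolding w_def using Suc.prems(1) u ancestor_in_V by blast
    define R' where "R' = R - descendants w"
    have "Suc (2 * m) \<le> card (R \<inter> descendants w)"
      unfolding w_def using Suc.prems(1,2) u deep by (intro card_descendants_of_ancestor) auto
    then have "card R' \<le> m * m"
      unfolding R'_def using Suc.prems(3) finite_R by (simp add: card_Diff_subset_Int)
    moreover have "R' \<subseteq> V" "\<And>v. v \<in> R' \<Longrightarrow> p v \<in> R'"
      unfolding R'_def using Suc.prems(1,2) child_in_descendants by auto
    ultimately obtain x where x_V: "\<forall>i<m. x i \<in> V"
      and x_cover: "\<forall>v\<in>R'. \<exists>i<m. \<exists>j\<le>2*i. (E ^^ j) (x i) v"
      using Suc.IH by blast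
    have close_to_w: "\<exists>j\<le>2*m. (E ^^ j) w v" if v: "v \<in> R" "v \<in> descendants w" for v
    proof (intro exI conjI)
      show "d v - d w \<le> 2 * m" using deepest[OF v(1)] \<open>d w = d u - 2 * m\<close> by linarith
      show "(E ^^ (d v - d w)) w v" using v(2) w_not_root by (rule relpowp_from_ancestor)
    qed
    show ?thesis
    proof (intro exI[of _ "x(m := w)"] conjI allI impI ballI)
      fix i assume "i < Suc m"
      then show "(x(m := w)) i \<in> V" using x_V w_V by (auto simp: less_Suc_eq)
    next
      fix v assume "v \<in> R"
      show "\<exists>i<Suc m. \<exists>j\<le>2*i. (E ^^ j) ((x(m := w)) i) v"
      proof (cases "v \<in> descendants w")
        case True
        then show ?thesis using close_to_w[OF \<open>v \<in> R\<close>] by (intro exI[of _ m]) auto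
      next
        case False
        then obtain i j where "i < m" "j \<le> 2*i" "(E ^^ j) (x i) v"
          using x_cover \<open>v \<in> R\<close> unfolding R'_def by blast
        then show ?thesis by (intro exI[of _ i]) auto
      qed
    qed
  qed
qed

end

lemma Least_relpowp_predecessor:
  assumes walk: "(E ^^ n) r v" and dist: "(LEAST n. (E ^^ n) r v) = Suc m"
  shows "\<exists>u. E u v \<and> (LEAST n. (E ^^ n) r u) = m"
proof -
  have "(E ^^ Suc m) r v" using walk dist LeastI by metis
  then obtain u where u: "(E ^^ m) r u" "E u v" by (elim relpowp_Suc_E)
  let ?l = "LEAST n. (E ^^ n) r u"
  have "?l \<le> m" using u(1) by (rule Least_le)
  moreover have "(E ^^ Suc ?l) r v" using LeastI[of "\<lambda>n. (E ^^ n) r u", OF u(1)] u(2) by (rule relpowp_Suc_I)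
  then have "Suc m \<le> Suc ?l" unfolding dist[symmetric] by (rule Least_le)
  ultimately show ?thesis using u(2) by auto
qed

lemma connected_graph_bfs_tree:
  assumes "connected_graph V E" "r \<in> V"
  shows "\<exists>p d. bfs_tree V E r p d"
proof -
  have finite_V: "finite V" and edge_in_V: "\<And>u v. E u v \<Longrightarrow> u \<in> V"
    and walk: "\<And>v. v \<in> V \<Longrightarrow> \<exists>n. (E ^^ n) r v"
    using assms unfolding connected_graph_def simple_graph_def rtranclp_power by blast+
  define d where "d v = (LEAST n. (E ^^ n) r v)" for v
  have parent_exists: "\<exists>u. E u v \<and> Suc (d u) = d v" if v: "v \<in> V" "v \<noteq> r" for v
  proof -
    obtain n where n: "(E ^^ n) r v" using walk v(1) by blast
    have "d v \<noteq> 0"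
    proof
      assume "d v = 0"
      then have "(E ^^ 0) r v" using n LeastI unfolding d_def by metis
      with v(2) show False by simp
    qed
    then obtain m where m: "d v = Suc m" using not0_implies_Suc by blast
    then obtain u where "E u v" "d u = m"
      using Least_relpowp_predecessor[OF n] unfolding d_def by blast
    with m show ?thesis by auto
  qed
  obtain parent where parent: "\<And>v. v \<in> V \<Longrightarrow> v \<noteq> r \<Longrightarrow> E (parent v) v \<and> Suc (d (parent v)) = d v"
    using parent_exists by metis
  define p where "p v = (if v = r then r else parent v)" for v
  have "bfs_tree V E r p d"
  proof
    show "d r = 0" unfolding d_def by (rule Least_eq_0) simp
  qed (use finite_V assms(2) parent edge_in_V in \<open>auto simp: p_def\<close>)
  then show ?thesis by blast
qed

lemma connected_graph_radius_cover:
  assumes "connected_graph V E" "V \<noteq> {}" "card V \<le> k * k"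
  shows "\<exists>x. (\<forall>i<k. x i \<in> V) \<and> (\<forall>v\<in>V. \<exists>i<k. \<exists>j\<le>2*i. (E ^^ j) (x i) v)"
proof -
  obtain r where "r \<in> V" using assms(2) by blast
  then obtain p d where "bfs_tree V E r p d" using connected_graph_bfs_tree[OF assms(1)] by blast
  then interpret bfs_tree V E r p d .
  show ?thesis using ancestor_radius_cover[OF subset_refl parent_in_V assms(3)] .
qed

lemma burning_number_empty: "burning_number {} F = 0"
  unfolding burning_number_def burns_in_def by (rule Least_eq_0) simp

lemma burning_number_graph_square_le:
  assumes "connected_graph V E" "card V \<le> k * k"
  shows "burning_number V (graph_square V E) \<le> k"
proof (cases "V = {}")
  case True
  then show ?thesis by (simp add: burning_number_empty)
next
  case False
  with assms obtain x where x_V: "\<forall>i<k. x i \<in> V"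
    and cover: "\<forall>v\<in>V. \<exists>i<k. \<exists>j\<le>2*i. (E ^^ j) (x i) v"
    using connected_graph_radius_cover by blast
  have graph: "simple_graph V E" using assms(1) unfolding connected_graph_def by blast
  show ?thesis
  proof (rule burning_number_le_if_radius_cover)
    fix v assume "v \<in> V"
    then obtain i j where i: "i < k" and j: "j \<le> 2 * i" and walk: "(E ^^ j) (x i) v"
      using cover by blast
    obtain t where "2 * t \<le> j + 1" and "(graph_square V E ^^ t) (x i) v"
      using graph_square_relpowp_half[OF graph walk] by blast
    moreover from this(1) j have "t \<le> i" by linarith
    ultimately show "\<exists>i<k. \<exists>t\<le>i. (graph_square V E ^^ t) (x i) v" using i by blast
  qed (use x_V in \<open>auto simp: graph_square_def\<close>)
qed

lemma le_nat_ceiling_sqrt_squared: "n \<le> nat \<lceil>sqrt (real n)\<rceil> * nat \<lceil>sqrt (real n)\<rceil>"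
proof -
  have "real n = sqrt (real n) * sqrt (real n)" by simp
  also have "\<dots> \<le> real (nat \<lceil>sqrt (real n)\<rceil>) * real (nat \<lceil>sqrt (real n)\<rceil>)"
    by (intro mult_mono real_nat_ceiling_ge of_nat_0_le_iff real_sqrt_ge_zero)
  finally show ?thesis by (metis of_nat_le_iff of_nat_mult)
qed

theorem mainTheorem7:
  fixes V :: "'a set" and E :: "'a \<Rightarrow> 'a \<Rightarrow> bool"
  assumes "connected_graph V E"
  shows "int (burning_number V (graph_square V E)) \<le> \<lceil>sqrt (real (card V))\<rceil>"
proof -
  define k where "k = nat \<lceil>sqrt (real (card V))\<rceil>"
  have "card V \<le> k * k" unfolding k_def by (rule le_nat_ceiling_sqrt_squared)
  with assms have "burning_number V (graph_square V E) \<le> k" by (rule burning_number_graph_square_le)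
  moreover have "0 \<le> \<lceil>sqrt (real (card V))\<rceil>"
    unfolding zero_le_ceiling using real_sqrt_ge_zero[of "real (card V)"] by linarith
  then have "int k = \<lceil>sqrt (real (card V))\<rceil>" unfolding k_def by simp
  ultimately show ?thesis by linarith
qed

end
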